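(* Let $i\colon H\to G$, $\iota_E\colon E\to H$ and $\iota_F\colon F\to H$ be faithful functors of finite groupoids. Let $E\times_H F$ be the isocomma of $\iota_E$ and $\iota_F$, and $E\times_G F$ the isocomma of $i\iota_E$ and $i\iota_F$. Then the functor $E\times_HF\to E\times_GF$ sending $(x,y,h)$ to $(x,y,i(h))$ and a morphism $(e,f)$ to $(e,f)$ is fully faithful.
   Context: A finite groupoid is a finite category all of whose morphisms are invertible. For functors $a\colon X\to Z$ and $b\colon Y\to Z$ of finite groupoids, the isocomma groupoid $X\times_ZY$ has as objects the triples $(x,y,g)$ with $x$ an object of $X$, $y$ an object of $Y$ and $g\colon a(x)\to b(y)$ an isomorphism in $Z$; morphisms $(x,y,g)\to(x',y',g')$ are pairs $(h,k)$ of morphisms $h\colon x\to x'$ in $X$ and $k\colon y\to y'$ in $Y$ with $g'\,a(h)=b(k)\,g$. *)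

theory Defs
  imports Main
begin

text \<open>Small categories given by an object set, an arrow set, domain, codomain,
identities and composition.  Comp C g f is "g after f", defined when Cod f = Dom g.\<close>

record ('o, 'm) cat =
  Obj :: "'o set"
  Arr :: "'m set"
  Dom :: "'m \<Rightarrow> 'o"
  Cod :: "'m \<Rightarrow> 'o"
  Id :: "'o \<Rightarrow> 'm"
  Comp :: "'m \<Rightarrow> 'm \<Rightarrow> 'm"

definition hom :: "('o, 'm, 'x) cat_scheme \<Rightarrow> 'o \<Rightarrow> 'o \<Rightarrow> 'm set" where
  "hom C x y = {f \<in> Arr C. Dom C f = x \<and> Cod C f = y}"

definition category :: "('o, 'm, 'x) cat_scheme \<Rightarrow> bool" where
  "category C \<longleftrightarrow>
     (\<forall>f\<in>Arr C. Dom C f \<in> Obj C \<and> Cod C f \<in> Obj C)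
   \<and> (\<forall>x\<in>Obj C. Id C x \<in> hom C x x)
   \<and> (\<forall>f\<in>Arr C. \<forall>g\<in>Arr C. Cod C f = Dom C g \<longrightarrow> Comp C g f \<in> hom C (Dom C f) (Cod C g))
   \<and> (\<forall>f\<in>Arr C. Comp C (Id C (Cod C f)) f = f \<and> Comp C f (Id C (Dom C f)) = f)
   \<and> (\<forall>f\<in>Arr C. \<forall>g\<in>Arr C. \<forall>h\<in>Arr C. Cod C f = Dom C g \<and> Cod C g = Dom C h \<longrightarrow>
        Comp C h (Comp C g f) = Comp C (Comp C h g) f)"

definition iso :: "('o, 'm, 'x) cat_scheme \<Rightarrow> 'm \<Rightarrow> bool" where
  "iso C f \<longleftrightarrow> f \<in> Arr C \<and> (\<exists>g\<in>hom C (Cod C f) (Dom C f).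
      Comp C g f = Id C (Dom C f) \<and> Comp C f g = Id C (Cod C f))"

definition groupoid :: "('o, 'm, 'x) cat_scheme \<Rightarrow> bool" where
  "groupoid C \<longleftrightarrow> category C \<and> (\<forall>f\<in>Arr C. iso C f)"

definition finite_groupoid :: "('o, 'm, 'x) cat_scheme \<Rightarrow> bool" where
  "finite_groupoid C \<longleftrightarrow> groupoid C \<and> finite (Obj C) \<and> finite (Arr C)"

definition is_functor :: "('o, 'm, 'x) cat_scheme \<Rightarrow> ('p, 'n, 'y) cat_scheme \<Rightarrow>
    ('o \<Rightarrow> 'p) \<Rightarrow> ('m \<Rightarrow> 'n) \<Rightarrow> bool" where
  "is_functor C D Fo Fm \<longleftrightarrow>
     (\<forall>x\<in>Obj C. Fo x \<in> Obj D)
   \<and> (\<forall>f\<in>Arr C. Fm f \<in> hom D (Fo (Dom C f)) (Fo (Cod C f)))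
   \<and> (\<forall>x\<in>Obj C. Fm (Id C x) = Id D (Fo x))
   \<and> (\<forall>f\<in>Arr C. \<forall>g\<in>Arr C. Cod C f = Dom C g \<longrightarrow> Fm (Comp C g f) = Comp D (Fm g) (Fm f))"

definition faithful :: "('o, 'm, 'x) cat_scheme \<Rightarrow> ('p, 'n, 'y) cat_scheme \<Rightarrow>
    ('o \<Rightarrow> 'p) \<Rightarrow> ('m \<Rightarrow> 'n) \<Rightarrow> bool" where
  "faithful C D Fo Fm \<longleftrightarrow> is_functor C D Fo Fm \<and>
     (\<forall>x\<in>Obj C. \<forall>y\<in>Obj C. inj_on Fm (hom C x y))"

definition full :: "('o, 'm, 'x) cat_scheme \<Rightarrow> ('p, 'n, 'y) cat_scheme \<Rightarrow>
    ('o \<Rightarrow> 'p) \<Rightarrow> ('m \<Rightarrow> 'n) \<Rightarrow> bool" where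
  "full C D Fo Fm \<longleftrightarrow> is_functor C D Fo Fm \<and>
     (\<forall>x\<in>Obj C. \<forall>y\<in>Obj C. \<forall>g\<in>hom D (Fo x) (Fo y). \<exists>f\<in>hom C x y. Fm f = g)"

definition fully_faithful :: "('o, 'm, 'x) cat_scheme \<Rightarrow> ('p, 'n, 'y) cat_scheme \<Rightarrow>
    ('o \<Rightarrow> 'p) \<Rightarrow> ('m \<Rightarrow> 'n) \<Rightarrow> bool" where
  "fully_faithful C D Fo Fm \<longleftrightarrow> full C D Fo Fm \<and> faithful C D Fo Fm"

text \<open>A morphism (h,k) : s -> t is encoded as the
triple (s, (h, k), t) so that domain and codomain are recoverable.\<close>

type_synonym ('o1, 'o2, 'm3) icobj = "'o1 \<times> 'o2 \<times> 'm3"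
type_synonym ('o1, 'm1, 'o2, 'm2, 'm3) icarr =
  "('o1, 'o2, 'm3) icobj \<times> ('m1 \<times> 'm2) \<times> ('o1, 'o2, 'm3) icobj"

definition isocomma ::
  "('o1, 'm1, 'x1) cat_scheme \<Rightarrow> ('o2, 'm2, 'x2) cat_scheme \<Rightarrow> ('o3, 'm3, 'x3) cat_scheme \<Rightarrow>
   ('o1 \<Rightarrow> 'o3) \<Rightarrow> ('m1 \<Rightarrow> 'm3) \<Rightarrow> ('o2 \<Rightarrow> 'o3) \<Rightarrow> ('m2 \<Rightarrow> 'm3) \<Rightarrow>
   (('o1, 'o2, 'm3) icobj, ('o1, 'm1, 'o2, 'm2, 'm3) icarr) cat" where
  "isocomma X Y Z ao am bo bm =
    \<lparr> Obj = {(x, y, g). x \<in> Obj X \<and> y \<in> Obj Y \<and> g \<in> hom Z (ao x) (bo y) \<and> iso Z g},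
      Arr = {(s, (h, k), t).
               s \<in> {(x, y, g). x \<in> Obj X \<and> y \<in> Obj Y \<and> g \<in> hom Z (ao x) (bo y) \<and> iso Z g}
             \<and> t \<in> {(x, y, g). x \<in> Obj X \<and> y \<in> Obj Y \<and> g \<in> hom Z (ao x) (bo y) \<and> iso Z g}
             \<and> h \<in> hom X (fst s) (fst t) \<and> k \<in> hom Y (fst (snd s)) (fst (snd t))
             \<and> Comp Z (snd (snd t)) (am h) = Comp Z (bm k) (snd (snd s))},
      Dom = (\<lambda>(s, hk, t). s),
      Cod = (\<lambda>(s, hk, t). t),
      Id = (\<lambda>s. (s, (Id X (fst s), Id Y (fst (snd s))), s)),
      Comp = (\<lambda>(s', (h', k'), t') (s, (h, k), t). (s, (Comp X h' h, Comp Y k' k), t')) \<rparr>"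

end

theory Submission
  imports Defs
begin

text \<open>An arrow \<open>(h, k)\<close> from \<open>(x, y, i g)\<close> to \<open>(x', y', i g')\<close> in the isocomma over \<open>G\<close>
is a commuting square \<open>i g' \<circ> i (\<iota>\<^sub>E h) = i (\<iota>\<^sub>F k) \<circ> i g\<close>.  Both \<open>g' \<circ> \<iota>\<^sub>E h\<close> and
\<open>\<iota>\<^sub>F k \<circ> g\<close> are arrows \<open>\<iota>\<^sub>E x \<rightarrow> \<iota>\<^sub>F y'\<close> of \<open>H\<close>, so faithfulness of \<open>i\<close> makes the square
commute already in \<open>H\<close>: the functor is surjective on hom-sets, and it is injective on them
because it leaves \<open>(h, k)\<close> unchanged.\<close>

lemma faithful_imp_functor: "faithful C D Fo Fm \<Longrightarrow> is_functor C D Fo Fm"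
  by (simp add: faithful_def)

lemma functor_Comp_hom:
  assumes "is_functor C D Fo Fm" "f \<in> hom C x y" "g \<in> hom C y z"
  shows "Fm (Comp C g f) = Comp D (Fm g) (Fm f)"
  using assms by (auto simp: is_functor_def hom_def)

lemma functor_hom:
  assumes "is_functor C D Fo Fm" "f \<in> hom C x y"
  shows "Fm f \<in> hom D (Fo x) (Fo y)"
  using assms by (auto simp: is_functor_def hom_def)

lemma category_Comp_hom:
  assumes "category C" "f \<in> hom C x y" "g \<in> hom C y z"
  shows "Comp C g f \<in> hom C x z"
  using assms by (auto simp: category_def hom_def)

lemma functor_preserves_iso:
  assumes "category C" "is_functor C D Fo Fm" "iso C f"
  shows "iso D (Fm f)"
proof -
  obtain g where g: "g \<in> hom C (Cod C f) (Dom C f)"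
    and gf: "Comp C g f = Id C (Dom C f)" and fg: "Comp C f g = Id C (Cod C f)"
    using assms(3) by (auto simp: iso_def)
  have f: "f \<in> hom C (Dom C f) (Cod C f)"
    using assms(3) by (simp add: iso_def hom_def)
  have objs: "Dom C f \<in> Obj C" "Cod C f \<in> Obj C"
    using assms(1) f by (auto simp: category_def hom_def)
  have Fmf: "Fm f \<in> hom D (Fo (Dom C f)) (Fo (Cod C f))"
    using functor_hom[OF assms(2) f] .
  have "Comp D (Fm g) (Fm f) = Id D (Fo (Dom C f))"
    using functor_Comp_hom[OF assms(2) f g] gf objs assms(2) by (simp add: is_functor_def)
  moreover have "Comp D (Fm f) (Fm g) = Id D (Fo (Cod C f))"
    using functor_Comp_hom[OF assms(2) g f] fg objs assms(2) by (simp add: is_functor_def)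
  ultimately show ?thesis
    using Fmf functor_hom[OF assms(2) g] unfolding iso_def hom_def by auto
qed

lemma faithful_commuting_square_iff:
  assumes "category C" "faithful C D Fo Fm"
    and "f \<in> hom C a b" "g \<in> hom C b d" "f' \<in> hom C a c" "g' \<in> hom C c d"
  shows "Comp D (Fm g) (Fm f) = Comp D (Fm g') (Fm f') \<longleftrightarrow> Comp C g f = Comp C g' f'"
proof -
  have "a \<in> Obj C" "d \<in> Obj C"
    using assms(1,3,4) by (auto simp: category_def hom_def)
  then have inj: "inj_on Fm (hom C a d)"
    using assms(2) by (simp add: faithful_def)
  note F = faithful_imp_functor[OF assms(2)]
  have "Comp C g f \<in> hom C a d" "Comp C g' f' \<in> hom C a d"
    using category_Comp_hom[OF assms(1)] assms(3-6) by blast+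
  then show ?thesis
    using inj functor_Comp_hom[OF F assms(3,4)] functor_Comp_hom[OF F assms(5,6)]
    by (metis inj_onD)
qed

lemma hom_isocomma:
  "hom (isocomma X Y Z ao am bo bm) (x, y, g) (x', y', g') =
     {((x, y, g), (h, k), (x', y', g')) | h k.
        (x, y, g) \<in> Obj (isocomma X Y Z ao am bo bm) \<and> (x', y', g') \<in> Obj (isocomma X Y Z ao am bo bm)
        \<and> h \<in> hom X x x' \<and> k \<in> hom Y y y' \<and> Comp Z g' (am h) = Comp Z (bm k) g}"
  by (auto simp: hom_def isocomma_def)

lemma Obj_isocomma:
  "(x, y, g) \<in> Obj (isocomma X Y Z ao am bo bm) \<longleftrightarrow>
     x \<in> Obj X \<and> y \<in> Obj Y \<and> g \<in> hom Z (ao x) (bo y) \<and> iso Z g"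
  by (simp add: isocomma_def)

definition isocomma_map_obj :: "('m \<Rightarrow> 'n) \<Rightarrow> ('o1, 'o2, 'm) icobj \<Rightarrow> ('o1, 'o2, 'n) icobj" where
  "isocomma_map_obj \<phi> = (\<lambda>(x, y, h). (x, y, \<phi> h))"

definition isocomma_map_arr ::
  "('m \<Rightarrow> 'n) \<Rightarrow> ('o1, 'm1, 'o2, 'm2, 'm) icarr \<Rightarrow> ('o1, 'm1, 'o2, 'm2, 'n) icarr" where
  "isocomma_map_arr \<phi> = (\<lambda>(s, ef, t). (isocomma_map_obj \<phi> s, ef, isocomma_map_obj \<phi> t))"

lemma isocomma_map_simps [simp]:
  "isocomma_map_obj \<phi> (x, y, h) = (x, y, \<phi> h)"
  "isocomma_map_arr \<phi> (s, ef, t) = (isocomma_map_obj \<phi> s, ef, isocomma_map_obj \<phi> t)"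
  by (simp_all add: isocomma_map_obj_def isocomma_map_arr_def)

context
  fixes E :: "('a, 'b, 'x1) cat_scheme" and F :: "('c, 'd, 'x2) cat_scheme"
    and H :: "('e, 'f, 'x3) cat_scheme" and G :: "('g, 'h, 'x4) cat_scheme"
    and io :: "'e \<Rightarrow> 'g" and im :: "'f \<Rightarrow> 'h"
    and eo :: "'a \<Rightarrow> 'e" and em :: "'b \<Rightarrow> 'f"
    and fo :: "'c \<Rightarrow> 'e" and fm :: "'d \<Rightarrow> 'f"
  assumes H: "category H" and i: "faithful H G io im"
    and e: "is_functor E H eo em" and f: "is_functor F H fo fm"
begin

private abbreviation (input) "C \<equiv> isocomma E F H eo em fo fm"
private abbreviation (input) "D \<equiv> isocomma E F G (io \<circ> eo) (im \<circ> em) (io \<circ> fo) (im \<circ> fm)"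

lemma isocomma_map_obj_Obj:
  assumes "s \<in> Obj C"
  shows "isocomma_map_obj im s \<in> Obj D"
proof -
  note i_functor = faithful_imp_functor[OF i]
  obtain x y g where "s = (x, y, g)" by (metis prod.exhaust)
  then show ?thesis
    using assms functor_hom[OF i_functor] functor_preserves_iso[OF H i_functor]
    by (auto simp: Obj_isocomma)
qed

lemma isocomma_square_iff:
  assumes "(x, y, g) \<in> Obj C" "(x', y', g') \<in> Obj C" "h \<in> hom E x x'" "k \<in> hom F y y'"
  shows "Comp G (im g') (im (em h)) = Comp G (im (fm k)) (im g) \<longleftrightarrow>
         Comp H g' (em h) = Comp H (fm k) g"
  using assms functor_hom[OF e] functor_hom[OF f]
  by (intro faithful_commuting_square_iff[OF H i]) (auto simp: Obj_isocomma)

lemma hom_isocomma_map: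
  assumes "s \<in> Obj C" "t \<in> Obj C"
  shows "hom D (isocomma_map_obj im s) (isocomma_map_obj im t) = isocomma_map_arr im ` hom C s t"
proof -
  obtain x y g x' y' g' where st: "s = (x, y, g)" "t = (x', y', g')" by (metis prod.exhaust)
  show ?thesis
    using assms isocomma_map_obj_Obj[OF assms(1)] isocomma_map_obj_Obj[OF assms(2)]
    unfolding st by (auto simp: hom_isocomma isocomma_square_iff image_iff)
qed

lemma isocomma_map_is_functor: "is_functor C D (isocomma_map_obj im) (isocomma_map_arr im)"
proof -
  have "isocomma_map_arr im a \<in> hom D (isocomma_map_obj im (Dom C a)) (isocomma_map_obj im (Cod C a))"
    if "a \<in> Arr C" for a
  proof -
    have "Dom C a \<in> Obj C" "Cod C a \<in> Obj C" "a \<in> hom C (Dom C a) (Cod C a)"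
      using that by (auto simp: isocomma_def hom_def)
    then show ?thesis using hom_isocomma_map by blast
  qed
  then show ?thesis
    using isocomma_map_obj_Obj unfolding is_functor_def
    by (auto simp: isocomma_def split: prod.splits)
qed

lemma isocomma_map_fully_faithful:
  "fully_faithful C D (isocomma_map_obj im) (isocomma_map_arr im)"
proof -
  have "inj_on (isocomma_map_arr im) (hom C s t)" for s t
    by (auto simp: inj_on_def hom_def isocomma_def)
  moreover have "\<exists>a\<in>hom C s t. isocomma_map_arr im a = b"
    if "s \<in> Obj C" "t \<in> Obj C" "b \<in> hom D (isocomma_map_obj im s) (isocomma_map_obj im t)" for s t b
    using that(3) unfolding hom_isocomma_map[OF that(1,2)] by blast
  ultimately show ?thesis
    using isocomma_map_is_functor unfolding fully_faithful_def full_def faithful_def by blast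
qed

end

theorem proposition4p1:
  fixes E :: "('a, 'b) cat" and F :: "('c, 'd) cat"
    and H :: "('e, 'f) cat" and G :: "('g, 'h) cat"
    and io :: "'e \<Rightarrow> 'g" and im :: "'f \<Rightarrow> 'h"
    and eo :: "'a \<Rightarrow> 'e" and em :: "'b \<Rightarrow> 'f"
    and fo :: "'c \<Rightarrow> 'e" and fm :: "'d \<Rightarrow> 'f"
  assumes "finite_groupoid E" and "finite_groupoid F"
    and "finite_groupoid H" and "finite_groupoid G"
    and "faithful H G io im"
    and "faithful E H eo em"
    and "faithful F H fo fm"
  shows "fully_faithful
           (isocomma E F H eo em fo fm)
           (isocomma E F G (io \<circ> eo) (im \<circ> em) (io \<circ> fo) (im \<circ> fm))
           (\<lambda>(x, y, h). (x, y, im h))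
           (\<lambda>(s, ef, t). ((\<lambda>(x, y, h). (x, y, im h)) s, ef, (\<lambda>(x, y, h). (x, y, im h)) t))"
proof -
  have "category H"
    using assms(3) by (simp add: finite_groupoid_def groupoid_def)
  moreover have "is_functor E H eo em" "is_functor F H fo fm"
    using assms(6,7) by (simp_all add: faithful_imp_functor)
  ultimately show ?thesis
    using isocomma_map_fully_faithful[OF _ assms(5)]
    unfolding isocomma_map_arr_def isocomma_map_obj_def by blast
qed

end
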